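(* Let $G$ be a group with finite generating set $(X,\pi)$ and let $\tau\colon G\to\mathbb{Z}$ be an ordering quasi-morphism with kernel $C$. If a $\tau$-transducer exists, then $P_\tau=\{g\in G:\tau(g)>0\}$ is a one-counter positive cone relative to $C$, i.e. $P_\tau$ is a positive cone relative to $C$ and there is a one-counter language $\mathcal{L}\subseteq X^*$ with $\pi(\mathcal{L})=P_\tau$. In particular, if there is a one-counter language $\mathcal{L}_C\subseteq X^*$ such that $P_C=\pi(\mathcal{L}_C)$ is a positive cone for $C$, then $P_\tau\cup P_C$ is the image under $\pi$ of a one-counter language and is a positive cone of $G$.
   Context: A finite generating set is a finite set $X$ with a surjective monoid homomorphism $\pi\colon X^*\to G$. For a subgroup $K\le G$, a positive cone relative to $K$ is a subsemigroup $P$ with $G=P\sqcup K\sqcup P^{-1}$; a positive cone is one relative to $\{1\}$. A one-counter language is one accepted by a nondeterministic pushdown automaton with a single stack symbol. An ordering quasi-morphism is $\tau\colon G\to\mathbb{Z}$ such that (i) $C=\{g:\tau(g)=0\}$ is a subgroup (the kernel), (ii) $\tau(g^{-1})=-\tau(g)$, (iii) $\tau(g)+\tau(h)+\tau((gh)^{-1})\le1$ for all $g,h$. A rational transducer $\mathbb{T}=(\mathcal{S},X,Y,\delta,s_0,\mathcal{A})$ has finite state set $\mathcal{S}$, input alphabet $X$, output alphabet $Y$, initial state $s_0$, accepting states $\mathcal{A}$ and $\delta\colon\mathcal{S}\times(X\sqcup\{\epsilon\})\to$ finite subsets of $\mathcal{S}\times Y^*$; $(r,v)\in\delta(s,u)$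 means there is a sequence of transitions from $s$ to $r$ with inputs concatenating to $u$ and outputs to $v$. $\mathbb{T}(u)=\{v:(a,v)\in\delta(s_0,u),a\in\mathcal{A}\}$ and $\mathbb{T}^{-1}(\mathcal{M})=\{u:\exists(a,v)\in\delta(s_0,u),a\in\mathcal{A},v\in\mathcal{M}\}$. With $\pi_{\mathbb{Z}}\colon\{t,t^{-1}\}^*\to\mathbb{Z}$, $t\mapsto1,t^{-1}\mapsto-1$, a $\tau$-transducer is a rational transducer with input alphabet $X$ and output alphabet $\{t,t^{-1}\}$ such that $G=\pi(\mathbb{T}^{-1}(\{t,t^{-1}\}^* ))$ and $\pi_{\mathbb{Z}}(v)=\tau(\pi(w))$ for every $w\in\mathbb{T}^{-1}(\{t,t^{-1}\}^* )$ and $v\in\mathbb{T}(w)$. *)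

theory Defs
  imports "HOL-Algebra.Group"
begin

definition finite_gen_set :: "('a, 'b) monoid_scheme \<Rightarrow> 'x set \<Rightarrow> ('x list \<Rightarrow> 'a) \<Rightarrow> bool" where
  "finite_gen_set G X \<pi> \<longleftrightarrow> finite X
     \<and> (\<forall>w \<in> lists X. \<pi> w \<in> carrier G)
     \<and> \<pi> [] = \<one>\<^bsub>G\<^esub>
     \<and> (\<forall>u \<in> lists X. \<forall>v \<in> lists X. \<pi> (u @ v) = \<pi> u \<otimes>\<^bsub>G\<^esub> \<pi> v)
     \<and> \<pi> ` lists X = carrier G"

definition pos_cone_rel :: "('a, 'b) monoid_scheme \<Rightarrow> 'a set \<Rightarrow> 'a set \<Rightarrow> bool" where
  "pos_cone_rel G K P \<longleftrightarrow> P \<subseteq> carrier G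
     \<and> (\<forall>a \<in> P. \<forall>b \<in> P. a \<otimes>\<^bsub>G\<^esub> b \<in> P)
     \<and> P \<inter> K = {} \<and> P \<inter> (\<lambda>x. inv\<^bsub>G\<^esub> x) ` P = {} \<and> K \<inter> (\<lambda>x. inv\<^bsub>G\<^esub> x) ` P = {}
     \<and> carrier G = P \<union> K \<union> (\<lambda>x. inv\<^bsub>G\<^esub> x) ` P"

definition pos_cone :: "('a, 'b) monoid_scheme \<Rightarrow> 'a set \<Rightarrow> bool" where
  "pos_cone G P \<longleftrightarrow> pos_cone_rel G {\<one>\<^bsub>G\<^esub>} P"

definition ordering_quasi_morphism :: "('a, 'b) monoid_scheme \<Rightarrow> ('a \<Rightarrow> int) \<Rightarrow> bool" where
  "ordering_quasi_morphism G \<tau> \<longleftrightarrow>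
     subgroup {g \<in> carrier G. \<tau> g = 0} G
     \<and> (\<forall>g \<in> carrier G. \<tau> (inv\<^bsub>G\<^esub> g) = - \<tau> g)
     \<and> (\<forall>g \<in> carrier G. \<forall>h \<in> carrier G. \<tau> g + \<tau> h + \<tau> (inv\<^bsub>G\<^esub> (g \<otimes>\<^bsub>G\<^esub> h)) \<le> 1)"

definition qm_kernel :: "('a, 'b) monoid_scheme \<Rightarrow> ('a \<Rightarrow> int) \<Rightarrow> 'a set" where
  "qm_kernel G \<tau> = {g \<in> carrier G. \<tau> g = 0}"

fun opt_word :: "'x option \<Rightarrow> 'x list" where
  "opt_word None = []"
| "opt_word (Some x) = [x]"

text \<open>A one-counter automaton is a nondeterministic pushdown automaton whose stack alphabet
  consists of a single symbol Z above a non-removable bottom-of-stack marker; the stack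
  content is thus a counter n (number of Z's). A transition (p, a, z, q, k) reads the input
  letter a (or nothing if a = None), is applicable iff the top of stack is the bottom marker
  (z = True, i.e. n = 0) resp. Z (z = False, n > 0), pops Z (if not the bottom marker),
  pushes k copies of Z and moves to state q.\<close>
type_synonym 'x oc_trans = "nat \<times> 'x option \<times> bool \<times> nat \<times> nat"

inductive oc_run :: "'x oc_trans set \<Rightarrow> nat \<Rightarrow> nat \<Rightarrow> 'x list \<Rightarrow> nat \<Rightarrow> nat \<Rightarrow> bool"
  for \<delta> :: "'x oc_trans set" where
  oc_refl: "oc_run \<delta> q n [] q n"
| oc_step: "\<lbrakk>(p, a, z, q, k) \<in> \<delta>; z = (n = 0);
            oc_run \<delta> q (if n = 0 then k else n - 1 + k) w r m\<rbrakk>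
           \<Longrightarrow> oc_run \<delta> p n (opt_word a @ w) r m"

definition one_counter_language :: "'x set \<Rightarrow> 'x list set \<Rightarrow> bool" where
  "one_counter_language X L \<longleftrightarrow> L \<subseteq> lists X \<and>
     (\<exists>(\<delta> :: 'x oc_trans set) q0 F. finite \<delta> \<and> finite F \<and>
        L = {w. \<exists>q m. q \<in> F \<and> oc_run \<delta> q0 0 w q m})"

text \<open>Transitions (s, a, r, v): from state s, reading a (a letter or \<epsilon> = None),
  go to state r outputting the word v. Output alphabet {t, t^{-1}} is encoded as bool
  (True = t, False = t^{-1}).\<close>
type_synonym ('x, 'y) td_trans = "nat \<times> 'x option \<times> nat \<times> 'y list"

inductive td_run :: "('x, 'y) td_trans set \<Rightarrow> nat \<Rightarrow> 'x list \<Rightarrow> nat \<Rightarrow> 'y list \<Rightarrow> bool"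
  for \<Delta> :: "('x, 'y) td_trans set" where
  td_refl: "td_run \<Delta> s [] s []"
| td_step: "\<lbrakk>(s, a, r, v) \<in> \<Delta>; td_run \<Delta> r u q v'\<rbrakk>
           \<Longrightarrow> td_run \<Delta> s (opt_word a @ u) q (v @ v')"

definition td_image :: "('x, 'y) td_trans set \<Rightarrow> nat \<Rightarrow> nat set \<Rightarrow> 'x list \<Rightarrow> 'y list set" where
  "td_image \<Delta> s0 A u = {v. \<exists>a \<in> A. td_run \<Delta> s0 u a v}"

definition td_domain :: "('x, 'y) td_trans set \<Rightarrow> nat \<Rightarrow> nat set \<Rightarrow> 'x list set" where
  "td_domain \<Delta> s0 A = {u. \<exists>a \<in> A. \<exists>v. td_run \<Delta> s0 u a v}"

definition rational_transducer :: "'x set \<Rightarrow> ('x, 'y) td_trans set \<Rightarrow> nat set \<Rightarrow> bool" where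
  "rational_transducer X \<Delta> A \<longleftrightarrow> finite \<Delta> \<and> finite A \<and>
     (\<forall>(s, a, r, v) \<in> \<Delta>. set_option a \<subseteq> X)"

fun pi_Z :: "bool list \<Rightarrow> int" where
  "pi_Z [] = 0"
| "pi_Z (b # v) = (if b then 1 else -1) + pi_Z v"

definition tau_transducer ::
  "('a, 'b) monoid_scheme \<Rightarrow> 'x set \<Rightarrow> ('x list \<Rightarrow> 'a) \<Rightarrow> ('a \<Rightarrow> int)
     \<Rightarrow> ('x, bool) td_trans set \<Rightarrow> nat \<Rightarrow> nat set \<Rightarrow> bool" where
  "tau_transducer G X \<pi> \<tau> \<Delta> s0 A \<longleftrightarrow> rational_transducer X \<Delta> A
     \<and> \<pi> ` td_domain \<Delta> s0 A = carrier G
     \<and> (\<forall>w \<in> td_domain \<Delta> s0 A. \<forall>v \<in> td_image \<Delta> s0 A w. pi_Z v = \<tau> (\<pi> w))"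

end

(* The quasi-morphism inequality gives tau (g h) >= tau g + tau h - 1, so the elements of positive
   tau form a subsemigroup, and tau (g^-1) = - tau g splits G into this semigroup, the kernel C and
   its inverse. A word lies in the language when some accepting run of the tau-transducer on it has
   output of positive value; a one-counter automaton simulates the transducer, emitting its output
   letter by letter and storing the running value as a sign in the finite control and its absolute
   value on the counter. A cone relative to a subgroup C is absorbed by C on both sides, which makes
   P_tau together with a positive cone of C a positive cone of G; its language is a union of two
   one-counter languages. *)

theory Submission
  imports Defs "HOL-Library.Countable" "HOL-Library.Sublist"
begin

section \<open>Counter automata with arbitrary state types\<close>

inductive counter_run ::
  "('s \<times> 'x option \<times> bool \<times> 's \<times> nat) set \<Rightarrow> 's \<Rightarrow> nat \<Rightarrow> 'x list \<Rightarrow> 's \<Rightarrow> nat \<Rightarrow> bool"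
  for \<delta> where
  counter_refl: "counter_run \<delta> q n [] q n"
| counter_step: "\<lbrakk>(p, a, z, q, k) \<in> \<delta>; z = (n = 0);
                  counter_run \<delta> q (if n = 0 then k else n - 1 + k) w r m\<rbrakk>
                 \<Longrightarrow> counter_run \<delta> p n (opt_word a @ w) r m"

definition counter_language ::
  "('s \<times> 'x option \<times> bool \<times> 's \<times> nat) set \<Rightarrow> 's \<Rightarrow> 's set \<Rightarrow> 'x list set" where
  "counter_language \<delta> q0 F = {w. \<exists>q m. q \<in> F \<and> counter_run \<delta> q0 0 w q m}"

lemma oc_run_iff_counter_run: "oc_run \<delta> p n w q m \<longleftrightarrow> counter_run \<delta> p n w q m"
proof
  show "oc_run \<delta> p n w q m \<Longrightarrow> counter_run \<delta> p n w q m"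
    by (induction rule: oc_run.induct) (auto intro: counter_run.intros)
  show "counter_run \<delta> p n w q m \<Longrightarrow> oc_run \<delta> p n w q m"
    by (induction rule: counter_run.induct) (auto intro: oc_run.intros)
qed

lemma counter_run_append:
  "counter_run \<delta> p n u q m \<Longrightarrow> counter_run \<delta> q m v r k \<Longrightarrow> counter_run \<delta> p n (u @ v) r k"
proof (induction rule: counter_run.induct)
  case (counter_step p a z q k' n w r m)
  then show ?case using counter_run.counter_step[of p a z q k' \<delta> n "w @ v"] by simp
qed simp

lemma counter_run_mono:
  "counter_run \<delta> p n w q m \<Longrightarrow> \<delta> \<subseteq> \<delta>' \<Longrightarrow> counter_run \<delta>' p n w q m"
  by (induction rule: counter_run.induct) (auto intro: counter_run.intros)

lemma counter_run_closed:
  assumes "counter_run \<delta> p n w q m" "p \<in> S"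
    and "\<And>p a z q k. (p, a, z, q, k) \<in> \<delta> \<Longrightarrow> p \<in> S \<Longrightarrow> q \<in> S \<and> (p, a, z, q, k) \<in> \<delta>'"
  shows "counter_run \<delta>' p n w q m \<and> q \<in> S"
  using assms
proof (induction rule: counter_run.induct)
  case (counter_step p a z q k n w r m)
  then show ?case by (metis counter_run.counter_step)
qed (simp add: counter_run.counter_refl)

definition map_counter_trans ::
  "('s \<Rightarrow> 't) \<Rightarrow> 's \<times> 'x option \<times> bool \<times> 's \<times> nat \<Rightarrow> 't \<times> 'x option \<times> bool \<times> 't \<times> nat" where
  "map_counter_trans f = (\<lambda>(p, a, z, q, k). (f p, a, z, f q, k))"

lemma map_counter_trans_simp [simp]:
  "map_counter_trans f (p, a, z, q, k) = (f p, a, z, f q, k)"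
  by (simp add: map_counter_trans_def)

lemma counter_run_map:
  "counter_run \<delta> p n w q m \<Longrightarrow> counter_run (map_counter_trans f ` \<delta>) (f p) n w (f q) m"
proof (induction rule: counter_run.induct)
  case (counter_step p a z q k n w r m)
  then have "(f p, a, z, f q, k) \<in> map_counter_trans f ` \<delta>"
    by (metis image_eqI map_counter_trans_simp)
  with counter_step show ?case by (blast intro: counter_run.counter_step)
qed (rule counter_refl)

lemma counter_run_map_inj:
  assumes "inj f" "counter_run (map_counter_trans f ` \<delta>) (f p) n w q' m"
  shows "\<exists>q. q' = f q \<and> counter_run \<delta> p n w q m"
  using assms(2)
proof (induction "f p" n w q' m arbitrary: p rule: counter_run.induct)
  case (counter_refl n)
  then show ?case by (blast intro: counter_run.counter_refl)
next
  case (counter_step a z q' k n w r m)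
  then obtain p' q where "(p', a, z, q, k) \<in> \<delta>" "f p' = f p" "q' = f q"
    by (auto simp: map_counter_trans_def)
  then have q: "(p, a, z, q, k) \<in> \<delta>" "q' = f q"
    using injD[OF assms(1)] by auto
  with counter_step obtain r' where "r = f r'" "counter_run \<delta> q (if n = 0 then k else n - 1 + k) w r' m"
    by blast
  with q counter_step.hyps(2) show ?case by (blast intro: counter_run.counter_step)
qed

lemma counter_language_map_inj:
  assumes "inj f"
  shows "counter_language (map_counter_trans f ` \<delta>) (f q0) (f ` F) = counter_language \<delta> q0 F"
proof (rule Set.set_eqI, rule iffI)
  fix w
  assume "w \<in> counter_language (map_counter_trans f ` \<delta>) (f q0) (f ` F)"
  then obtain q m where "q \<in> F" "counter_run (map_counter_trans f ` \<delta>) (f q0) 0 w (f q) m"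
    unfolding counter_language_def by blast
  moreover from counter_run_map_inj[OF assms this(2)] obtain q' where
    "f q = f q'" "counter_run \<delta> q0 0 w q' m"
    by blast
  ultimately show "w \<in> counter_language \<delta> q0 F"
    unfolding counter_language_def using injD[OF assms] by blast
next
  fix w
  assume "w \<in> counter_language \<delta> q0 F"
  then show "w \<in> counter_language (map_counter_trans f ` \<delta>) (f q0) (f ` F)"
    unfolding counter_language_def by (blast intro: counter_run_map)
qed

lemma one_counter_language_iff:
  "one_counter_language X L \<longleftrightarrow> L \<subseteq> lists X \<and>
     (\<exists>(\<delta> :: 'x oc_trans set) q0 F. finite \<delta> \<and> finite F \<and> L = counter_language \<delta> q0 F)"
  by (simp add: one_counter_language_def counter_language_def oc_run_iff_counter_run)

lemma one_counter_languageI: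
  fixes \<delta> :: "('s::countable \<times> 'x option \<times> bool \<times> 's \<times> nat) set"
  assumes "finite \<delta>" "finite F" "L \<subseteq> lists X" "L = counter_language \<delta> q0 F"
  shows "one_counter_language X L"
  unfolding one_counter_language_iff
proof (intro conjI exI)
  show "finite (map_counter_trans to_nat ` \<delta>)" "finite (to_nat ` F)"
    using assms(1,2) by simp_all
  show "L = counter_language (map_counter_trans to_nat ` \<delta>) (to_nat q0) (to_nat ` F)"
    by (simp add: counter_language_map_inj assms(4))
qed fact

section \<open>Union of one-counter languages\<close>

definition union_counter_trans ::
  "('s \<times> 'x option \<times> bool \<times> 's \<times> nat) set \<Rightarrow> 's \<Rightarrow> ('t \<times> 'x option \<times> bool \<times> 't \<times> nat) set \<Rightarrow> 't
     \<Rightarrow> (('s + 't) option \<times> 'x option \<times> bool \<times> ('s + 't) option \<times> nat) set" where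
  "union_counter_trans \<delta>1 q1 \<delta>2 q2 =
     {(None, None, True, Some (Inl q1), 0), (None, None, True, Some (Inr q2), 0)}
     \<union> map_counter_trans (Some \<circ> Inl) ` \<delta>1 \<union> map_counter_trans (Some \<circ> Inr) ` \<delta>2"

lemma finite_union_counter_trans:
  "finite \<delta>1 \<Longrightarrow> finite \<delta>2 \<Longrightarrow> finite (union_counter_trans \<delta>1 q1 \<delta>2 q2)"
  by (simp add: union_counter_trans_def)

lemma counter_run_union_trans_Inl:
  "counter_run (union_counter_trans \<delta>1 q1 \<delta>2 q2) (Some (Inl p)) n w q m
     \<longleftrightarrow> (\<exists>q'. q = Some (Inl q') \<and> counter_run \<delta>1 p n w q' m)"
proof
  assume run: "counter_run (union_counter_trans \<delta>1 q1 \<delta>2 q2) (Some (Inl p)) n w q m"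
  have closed: "q' \<in> range (Some \<circ> Inl) \<and> (p', a, z, q', k) \<in> map_counter_trans (Some \<circ> Inl) ` \<delta>1"
    if "(p', a, z, q', k) \<in> union_counter_trans \<delta>1 q1 \<delta>2 q2" "p' \<in> range (Some \<circ> Inl)"
    for p' a z q' k
    using that by (auto simp: union_counter_trans_def)
  have "Some (Inl p) \<in> range (Some \<circ> Inl)" by simp
  from counter_run_closed[OF run this closed]
  have "counter_run (map_counter_trans (Some \<circ> Inl) ` \<delta>1) ((Some \<circ> Inl) p) n w q m"
    by simp
  then show "\<exists>q'. q = Some (Inl q') \<and> counter_run \<delta>1 p n w q' m"
    using counter_run_map_inj[of "Some \<circ> Inl"] by (simp add: inj_def)
next
  assume "\<exists>q'. q = Some (Inl q') \<and> counter_run \<delta>1 p n w q' m"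
  then obtain q' where "q = Some (Inl q')" "counter_run \<delta>1 p n w q' m" by blast
  from counter_run_map[OF this(2), of "Some \<circ> Inl"] \<open>q = Some (Inl q')\<close>
  have "counter_run (map_counter_trans (Some \<circ> Inl) ` \<delta>1) (Some (Inl p)) n w q m" by simp
  then show "counter_run (union_counter_trans \<delta>1 q1 \<delta>2 q2) (Some (Inl p)) n w q m"
    by (rule counter_run_mono) (auto simp: union_counter_trans_def)
qed

lemma counter_run_union_trans_Inr:
  "counter_run (union_counter_trans \<delta>1 q1 \<delta>2 q2) (Some (Inr p)) n w q m
     \<longleftrightarrow> (\<exists>q'. q = Some (Inr q') \<and> counter_run \<delta>2 p n w q' m)"
proof
  assume run: "counter_run (union_counter_trans \<delta>1 q1 \<delta>2 q2) (Some (Inr p)) n w q m"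
  have closed: "q' \<in> range (Some \<circ> Inr) \<and> (p', a, z, q', k) \<in> map_counter_trans (Some \<circ> Inr) ` \<delta>2"
    if "(p', a, z, q', k) \<in> union_counter_trans \<delta>1 q1 \<delta>2 q2" "p' \<in> range (Some \<circ> Inr)"
    for p' a z q' k
    using that by (auto simp: union_counter_trans_def)
  have "Some (Inr p) \<in> range (Some \<circ> Inr)" by simp
  from counter_run_closed[OF run this closed]
  have "counter_run (map_counter_trans (Some \<circ> Inr) ` \<delta>2) ((Some \<circ> Inr) p) n w q m"
    by simp
  then show "\<exists>q'. q = Some (Inr q') \<and> counter_run \<delta>2 p n w q' m"
    using counter_run_map_inj[of "Some \<circ> Inr"] by (simp add: inj_def)
next
  assume "\<exists>q'. q = Some (Inr q') \<and> counter_run \<delta>2 p n w q' m"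
  then obtain q' where "q = Some (Inr q')" "counter_run \<delta>2 p n w q' m" by blast
  from counter_run_map[OF this(2), of "Some \<circ> Inr"] \<open>q = Some (Inr q')\<close>
  have "counter_run (map_counter_trans (Some \<circ> Inr) ` \<delta>2) (Some (Inr p)) n w q m" by simp
  then show "counter_run (union_counter_trans \<delta>1 q1 \<delta>2 q2) (Some (Inr p)) n w q m"
    by (rule counter_run_mono) (auto simp: union_counter_trans_def)
qed

lemma counter_run_union_trans_None:
  assumes "q \<noteq> None"
  shows "counter_run (union_counter_trans \<delta>1 q1 \<delta>2 q2) None 0 w q m \<longleftrightarrow>
    counter_run (union_counter_trans \<delta>1 q1 \<delta>2 q2) (Some (Inl q1)) 0 w q m \<or>
    counter_run (union_counter_trans \<delta>1 q1 \<delta>2 q2) (Some (Inr q2)) 0 w q m"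
    (is "counter_run ?\<delta> None 0 w q m \<longleftrightarrow> _")
proof
  assume "counter_run ?\<delta> None 0 w q m"
  then show "counter_run ?\<delta> (Some (Inl q1)) 0 w q m \<or> counter_run ?\<delta> (Some (Inr q2)) 0 w q m"
    using assms by cases (auto simp: union_counter_trans_def)
next
  have "(None, None, True, Some (Inl q1), 0) \<in> ?\<delta>" "(None, None, True, Some (Inr q2), 0) \<in> ?\<delta>"
    by (simp_all add: union_counter_trans_def)
  then show "counter_run ?\<delta> (Some (Inl q1)) 0 w q m \<or> counter_run ?\<delta> (Some (Inr q2)) 0 w q m
      \<Longrightarrow> counter_run ?\<delta> None 0 w q m"
    using counter_step[of None None True _ 0 ?\<delta> 0 w q m] by auto
qed

lemma counter_language_union:
  "counter_language (union_counter_trans \<delta>1 q1 \<delta>2 q2) None ((Some \<circ> Inl) ` F1 \<union> (Some \<circ> Inr) ` F2)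
     = counter_language \<delta>1 q1 F1 \<union> counter_language \<delta>2 q2 F2"
  (is "counter_language ?\<delta> None ?F = _")
proof -
  have "(q \<in> ?F \<and> counter_run ?\<delta> None 0 w q m) \<longleftrightarrow>
      (\<exists>q'\<in>F1. q = Some (Inl q') \<and> counter_run \<delta>1 q1 0 w q' m) \<or>
      (\<exists>q'\<in>F2. q = Some (Inr q') \<and> counter_run \<delta>2 q2 0 w q' m)" for q w m
    by (auto simp: counter_run_union_trans_None counter_run_union_trans_Inl counter_run_union_trans_Inr)
  then show ?thesis
    unfolding counter_language_def by (auto 0 3)
qed

lemma one_counter_language_union:
  fixes X :: "'x set"
  assumes "one_counter_language X L1" "one_counter_language X L2"
  shows "one_counter_language X (L1 \<union> L2)"
proof -
  obtain \<delta>1 q1 F1 where 1: "L1 \<subseteq> lists X" "finite (\<delta>1 :: 'x oc_trans set)" "finite F1"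
    "L1 = counter_language \<delta>1 q1 F1"
    using assms(1) unfolding one_counter_language_iff by (elim conjE exE) simp
  obtain \<delta>2 q2 F2 where 2: "L2 \<subseteq> lists X" "finite (\<delta>2 :: 'x oc_trans set)" "finite F2"
    "L2 = counter_language \<delta>2 q2 F2"
    using assms(2) unfolding one_counter_language_iff by (elim conjE exE) simp
  show ?thesis
  proof (rule one_counter_languageI)
    show "L1 \<union> L2 = counter_language (union_counter_trans \<delta>1 q1 \<delta>2 q2) None
        ((Some \<circ> Inl) ` F1 \<union> (Some \<circ> Inr) ` F2)"
      by (simp only: 1(4) 2(4) counter_language_union)
  qed (use 1 2 in \<open>simp_all add: finite_union_counter_trans\<close>)
qed

section \<open>Counter automata simulating a transducer\<close>

lemma pi_Z_append: "pi_Z (u @ v) = pi_Z u + pi_Z v"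
  by (induction u) auto

text \<open>A counter cannot become negative, so a signed value is stored as its sign in the finite
  control and its absolute value on the counter.\<close>

definition signed :: "bool \<Rightarrow> nat \<Rightarrow> int" where
  "signed b n = (if b then int n else - int n)"

definition counter_add :: "bool \<Rightarrow> bool \<Rightarrow> bool \<Rightarrow> bool \<times> nat" where
  "counter_add b x z =
     (if b = x then (b, if z then 1 else 2) else if z then (x, 1) else (b, 0))"

lemma signed_counter_add:
  "counter_add b x (n = 0) = (b', k) \<Longrightarrow>
     signed b' (if n = 0 then k else n - 1 + k) = signed b n + pi_Z [x]"
  by (cases b; cases x; cases "n = 0") (auto simp: counter_add_def signed_def)

definition pending_outputs :: "('x, bool) td_trans set \<Rightarrow> (nat \<times> bool list) set" where
  "pending_outputs \<Delta> = {(r, u). \<exists>s a v. (s, a, r, v) \<in> \<Delta> \<and> suffix u v}"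

lemma finite_pending_outputs:
  assumes "finite \<Delta>"
  shows "finite (pending_outputs \<Delta>)"
proof (rule finite_subset)
  show "pending_outputs \<Delta> \<subseteq> (\<Union>(s, a, r, v) \<in> \<Delta>. {r} \<times> set (suffixes v))"
    by (force simp: pending_outputs_def)
qed (use assms in auto)

text \<open>In state Some (s, u, b) the transducer is in state s, its output u is still to be added to
  the counter letter by letter, and b is the sign of the value. Reading an input letter simulates
  a transducer transition and leaves the counter unchanged; the final move to the accepting state
  None requires a positive value.\<close>

definition positive_output_counter_trans ::
  "('x, bool) td_trans set \<Rightarrow> nat set \<Rightarrow> ((nat \<times> bool list \<times> bool) option \<times> 'x option \<times> bool
     \<times> (nat \<times> bool list \<times> bool) option \<times> nat) set" where
  "positive_output_counter_trans \<Delta> A =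
     (\<lambda>((s, a, r, v), b, z). (Some (s, [], b), a, z, Some (r, v, b), if z then 0 else 1)) ` (\<Delta> \<times> UNIV)
   \<union> (\<lambda>((r, u), b, z). (Some (r, u, b), None, z, Some (r, tl u, fst (counter_add b (hd u) z)),
        snd (counter_add b (hd u) z))) ` ((pending_outputs \<Delta> - UNIV \<times> {[]}) \<times> UNIV)
   \<union> (\<lambda>s. (Some (s, [], True), None, False, None, 1)) ` A"

lemma finite_positive_output_counter_trans:
  "finite \<Delta> \<Longrightarrow> finite A \<Longrightarrow> finite (positive_output_counter_trans \<Delta> A)"
  by (simp add: positive_output_counter_trans_def finite_pending_outputs)

lemma positive_output_counter_trans_readI:
  "(s, a, r, v) \<in> \<Delta> \<Longrightarrow>
     (Some (s, [], b), a, z, Some (r, v, b), if z then 0 else 1) \<in> positive_output_counter_trans \<Delta> A"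
  unfolding positive_output_counter_trans_def
  by (rule UnI1, rule UnI1, rule image_eqI[where x = "((s, a, r, v), b, z)"]) auto

lemma positive_output_counter_trans_emitI:
  "(r, x # u) \<in> pending_outputs \<Delta> \<Longrightarrow> counter_add b x z = (b', k) \<Longrightarrow>
     (Some (r, x # u, b), None, z, Some (r, u, b'), k) \<in> positive_output_counter_trans \<Delta> A"
  unfolding positive_output_counter_trans_def
  by (rule UnI1, rule UnI2, rule image_eqI[where x = "((r, x # u), b, z)"]) auto

lemma positive_output_counter_trans_acceptI:
  "s \<in> A \<Longrightarrow> (Some (s, [], True), None, False, None, 1) \<in> positive_output_counter_trans \<Delta> A"
  unfolding positive_output_counter_trans_def by blast

lemma positive_output_counter_trans_cases:
  assumes "(Some (s, u, b), a, z, q, k) \<in> positive_output_counter_trans \<Delta> A"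
  obtains (read) r v where "u = []" "(s, a, r, v) \<in> \<Delta>" "q = Some (r, v, b)" "k = (if z then 0 else 1)"
  | (emit) x u' b' where "u = x # u'" "a = None" "counter_add b x z = (b', k)" "q = Some (s, u', b')"
  | (accept) "u = []" "b" "s \<in> A" "a = None" "\<not> z" "q = None"
  using assms unfolding positive_output_counter_trans_def
  by (cases u) (auto simp: prod_eq_iff)

lemma counter_run_from_None:
  "counter_run (positive_output_counter_trans \<Delta> A) None n w q m \<Longrightarrow> w = []"
  by (cases rule: counter_run.cases) (auto simp: positive_output_counter_trans_def)

lemma counter_run_emit_pending:
  "(r, u) \<in> pending_outputs \<Delta> \<Longrightarrow>
     \<exists>b' n'. counter_run (positive_output_counter_trans \<Delta> A) (Some (r, u, b)) n [] (Some (r, [], b')) n'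
       \<and> signed b' n' = signed b n + pi_Z u"
proof (induction u arbitrary: b n)
  case Nil
  then show ?case using counter_refl by fastforce
next
  case (Cons x u)
  obtain b1 k where add: "counter_add b x (n = 0) = (b1, k)"
    by (cases "counter_add b x (n = 0)")
  have "(r, u) \<in> pending_outputs \<Delta>"
    using Cons.prems by (auto simp: pending_outputs_def dest: suffix_ConsD)
  with Cons.IH obtain b' n' where
    run: "counter_run (positive_output_counter_trans \<Delta> A) (Some (r, u, b1)) (if n = 0 then k else n - 1 + k) []
      (Some (r, [], b')) n'" and
    val: "signed b' n' = signed b1 (if n = 0 then k else n - 1 + k) + pi_Z u"
    by blast
  have "counter_run (positive_output_counter_trans \<Delta> A) (Some (r, x # u, b)) n [] (Some (r, [], b')) n'"
    using counter_step[OF positive_output_counter_trans_emitI[OF Cons.prems add] refl run] by simp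
  moreover have "signed b' n' = signed b n + pi_Z (x # u)"
    using val signed_counter_add[OF add] by simp
  ultimately show ?case by blast
qed

lemma counter_run_of_td_run:
  "td_run \<Delta> s w q v \<Longrightarrow>
     \<exists>b' n'. counter_run (positive_output_counter_trans \<Delta> A) (Some (s, [], b)) n w (Some (q, [], b')) n'
       \<and> signed b' n' = signed b n + pi_Z v"
proof (induction arbitrary: b n rule: td_run.induct)
  case (td_refl s)
  then show ?case using counter_refl by fastforce
next
  case (td_step s a r v u q v')
  have "(r, v) \<in> pending_outputs \<Delta>"
    using td_step.hyps(1) by (auto simp: pending_outputs_def)
  then obtain b1 n1 where
    emit: "counter_run (positive_output_counter_trans \<Delta> A) (Some (r, v, b)) n [] (Some (r, [], b1)) n1" and
    val1: "signed b1 n1 = signed b n + pi_Z v"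
    using counter_run_emit_pending by blast
  obtain b' n' where
    rest: "counter_run (positive_output_counter_trans \<Delta> A) (Some (r, [], b1)) n1 u (Some (q, [], b')) n'" and
    val2: "signed b' n' = signed b1 n1 + pi_Z v'"
    using td_step.IH by blast
  have "(if n = 0 then if n = 0 then 0 else 1 else n - 1 + (if n = 0 then 0 else 1)) = n"
    by simp
  with counter_run_append[OF emit rest]
  have "counter_run (positive_output_counter_trans \<Delta> A) (Some (s, [], b)) n (opt_word a @ u)
      (Some (q, [], b')) n'"
    using counter_step[OF positive_output_counter_trans_readI[OF td_step.hyps(1)] refl] by simp
  moreover have "signed b' n' = signed b n + pi_Z (v @ v')"
    using val1 val2 by (simp add: pi_Z_append)
  ultimately show ?case by blast
qed

lemma td_run_of_accepting_counter_run:
  "counter_run (positive_output_counter_trans \<Delta> A) p n w q m \<Longrightarrow> q = None \<Longrightarrow> p = Some (s, u, b) \<Longrightarrow>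
     \<exists>a\<in>A. \<exists>v. td_run \<Delta> s w a v \<and> 0 < signed b n + pi_Z u + pi_Z v"
proof (induction arbitrary: s u b rule: counter_run.induct)
  case (counter_step p a z q' k n w r m)
  from counter_step.hyps(1) show ?case
    unfolding \<open>p = Some (s, u, b)\<close>
  proof (cases rule: positive_output_counter_trans_cases)
    case (read r' v)
    then have "(if n = 0 then k else n - 1 + k) = n"
      using counter_step.hyps(2) by auto
    with counter_step.IH[OF counter_step.prems(1) read(3)] obtain a' v' where
      a': "a' \<in> A" "td_run \<Delta> r' w a' v'" and pos: "0 < signed b n + pi_Z v + pi_Z v'"
      by auto
    have "td_run \<Delta> s (opt_word a @ w) a' (v @ v')"
      by (rule td_step[OF read(2) a'(2)])
    moreover have "0 < signed b n + pi_Z u + pi_Z (v @ v')"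
      using pos read(1) by (simp add: pi_Z_append)
    ultimately show ?thesis using a'(1) by blast
  next
    case (emit x u' b')
    then obtain a' v' where a': "a' \<in> A" "td_run \<Delta> s w a' v'"
      and pos: "0 < signed b' (if n = 0 then k else n - 1 + k) + pi_Z u' + pi_Z v'"
      using counter_step.IH[OF counter_step.prems(1)] by blast
    have "signed b' (if n = 0 then k else n - 1 + k) = signed b n + pi_Z [x]"
      using signed_counter_add emit(3) counter_step.hyps(2) by blast
    with pos emit(1) have "0 < signed b n + pi_Z u + pi_Z v'"
      by simp
    with a' emit(2) show ?thesis by auto
  next
    case accept
    with counter_step have "w = []"
      using counter_run_from_None by blast
    with accept counter_step.hyps(2) show ?thesis
      using td_refl[of \<Delta> s] by (force simp: signed_def)
  qed
qed simp

definition positive_output_language :: "('x, bool) td_trans set \<Rightarrow> nat \<Rightarrow> nat set \<Rightarrow> 'x list set" where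
  "positive_output_language \<Delta> s0 A = {w. \<exists>a\<in>A. \<exists>v. td_run \<Delta> s0 w a v \<and> 0 < pi_Z v}"

lemma counter_language_positive_output:
  "counter_language (positive_output_counter_trans \<Delta> A) (Some (s0, [], True)) {None}
     = positive_output_language \<Delta> s0 A"
proof (rule Set.set_eqI, rule iffI)
  fix w
  assume "w \<in> counter_language (positive_output_counter_trans \<Delta> A) (Some (s0, [], True)) {None}"
  then obtain m where "counter_run (positive_output_counter_trans \<Delta> A) (Some (s0, [], True)) 0 w None m"
    by (auto simp: counter_language_def)
  from td_run_of_accepting_counter_run[OF this refl refl] show "w \<in> positive_output_language \<Delta> s0 A"
    by (simp add: positive_output_language_def signed_def)
next
  fix w
  assume "w \<in> positive_output_language \<Delta> s0 A"
  then obtain a v where "a \<in> A" "td_run \<Delta> s0 w a v" "0 < pi_Z v"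
    by (auto simp: positive_output_language_def)
  moreover obtain b n where
    run: "counter_run (positive_output_counter_trans \<Delta> A) (Some (s0, [], True)) 0 w (Some (a, [], b)) n"
    and "signed b n = pi_Z v"
    using counter_run_of_td_run[OF \<open>td_run \<Delta> s0 w a v\<close>] by (fastforce simp: signed_def)
  ultimately have "b" "n \<noteq> 0"
    by (auto simp: signed_def split: if_splits)
  then have "counter_run (positive_output_counter_trans \<Delta> A) (Some (a, [], b)) n [] None n"
    using counter_step[OF positive_output_counter_trans_acceptI[OF \<open>a \<in> A\<close>] _ counter_refl] by simp
  with run show "w \<in> counter_language (positive_output_counter_trans \<Delta> A) (Some (s0, [], True)) {None}"
    unfolding counter_language_def using counter_run_append by fastforce
qed

lemma td_run_lists:
  "td_run \<Delta> s w q v \<Longrightarrow> rational_transducer X \<Delta> A \<Longrightarrow> w \<in> lists X"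
proof (induction rule: td_run.induct)
  case (td_step s a r v u q v')
  then have "set_option a \<subseteq> X" by (auto simp: rational_transducer_def)
  with td_step show ?case by (cases a) auto
qed simp

lemma one_counter_language_positive_output:
  assumes "rational_transducer X \<Delta> A"
  shows "one_counter_language X (positive_output_language \<Delta> s0 A)"
proof (rule one_counter_languageI)
  show "finite (positive_output_counter_trans \<Delta> A)"
    using assms by (simp add: rational_transducer_def finite_positive_output_counter_trans)
  show "positive_output_language \<Delta> s0 A \<subseteq> lists X"
    unfolding positive_output_language_def using td_run_lists[OF _ assms] by blast
  show "positive_output_language \<Delta> s0 A
      = counter_language (positive_output_counter_trans \<Delta> A) (Some (s0, [], True)) {None}"
    by (simp add: counter_language_positive_output)
qed simp

lemma image_positive_output_language:
  assumes "finite_gen_set G X \<pi>" "tau_transducer G X \<pi> \<tau> \<Delta> s0 A"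
  shows "\<pi> ` positive_output_language \<Delta> s0 A = {g \<in> carrier G. 0 < \<tau> g}"
proof -
  have \<tau>_run: "pi_Z v = \<tau> (\<pi> w)" if "a \<in> A" "td_run \<Delta> s0 w a v" for w a v
    using assms(2) that unfolding tau_transducer_def td_domain_def td_image_def by blast
  show ?thesis
  proof (rule Set.set_eqI, rule iffI)
    fix g assume "g \<in> \<pi> ` positive_output_language \<Delta> s0 A"
    then obtain w a v where "g = \<pi> w" "a \<in> A" "td_run \<Delta> s0 w a v" "0 < pi_Z v"
      unfolding positive_output_language_def by blast
    moreover have "w \<in> lists X"
      using td_run_lists[OF \<open>td_run \<Delta> s0 w a v\<close>] assms(2) unfolding tau_transducer_def by blast
    ultimately show "g \<in> {g \<in> carrier G. 0 < \<tau> g}"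
      using assms(1) \<tau>_run by (auto simp: finite_gen_set_def)
  next
    fix g assume g: "g \<in> {g \<in> carrier G. 0 < \<tau> g}"
    then have "g \<in> \<pi> ` td_domain \<Delta> s0 A"
      using assms(2) by (simp add: tau_transducer_def)
    then obtain w a v where "g = \<pi> w" "a \<in> A" "td_run \<Delta> s0 w a v"
      unfolding td_domain_def by blast
    moreover from this g \<tau>_run have "0 < pi_Z v" by simp
    ultimately show "g \<in> \<pi> ` positive_output_language \<Delta> s0 A"
      unfolding positive_output_language_def by blast
  qed
qed

section \<open>Positive cones\<close>

context group
begin

lemma pos_cone_rel_mult_subgroup:
  assumes "subgroup K G" "pos_cone_rel G K P" "p \<in> P" "k \<in> K"
  shows "p \<otimes> k \<in> P" "k \<otimes> p \<in> P"
proof -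
  have P: "P \<subseteq> carrier G" "\<And>a b. a \<in> P \<Longrightarrow> b \<in> P \<Longrightarrow> a \<otimes> b \<in> P" "P \<inter> K = {}"
    "carrier G = P \<union> K \<union> (\<lambda>x. inv x) ` P"
    using assms(2) unfolding pos_cone_rel_def by auto
  have K: "k \<in> carrier G" "inv k \<in> K"
    using assms(1,4) by (auto simp: subgroup.mem_carrier subgroup.m_inv_closed)
  have p: "p \<in> carrier G" "p \<notin> K"
    using assms(3) P(1,3) by auto
  \<comment> \<open>If a product of p and k were inverse to some p' in P, then p p' or p' p would be
     inverse to k, hence in K, contradicting that P is a semigroup disjoint from K.\<close>
  have not_inv: "inv p' \<noteq> x" if "p' \<in> P" "x = p \<otimes> k \<or> x = k \<otimes> p" for p' x
  proof
    assume x: "inv p' = x"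
    have p': "p' \<in> carrier G" using that(1) P(1) by auto
    from that(2) have "inv k = p' \<otimes> p \<or> inv k = p \<otimes> p'"
    proof
      assume "x = p \<otimes> k"
      with x p' have "p' \<otimes> (p \<otimes> k) = \<one>" by (metis r_inv)
      then have "p' \<otimes> p \<otimes> k = \<one>" using p p' K by (simp add: m_assoc)
      then have "inv k = p' \<otimes> p" by (rule inv_equality) (use p p' K in simp_all)
      then show ?thesis ..
    next
      assume "x = k \<otimes> p"
      with x p' have "k \<otimes> p \<otimes> p' = \<one>" by (metis l_inv)
      then have "k \<otimes> (p \<otimes> p') = \<one>" using p p' K by (simp add: m_assoc)
      then have "p \<otimes> p' \<otimes> k = \<one>" by (rule inv_comm) (use p p' K in simp_all)
      then have "inv k = p \<otimes> p'" by (rule inv_equality) (use p p' K in simp_all)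
      then show ?thesis ..
    qed
    then have "inv k \<in> P" using P(2)[OF that(1) assms(3)] P(2)[OF assms(3) that(1)] by auto
    with K(2) P(3) show False by blast
  qed
  have "p \<otimes> k \<notin> K"
  proof
    assume "p \<otimes> k \<in> K"
    then have "p \<otimes> k \<otimes> inv k \<in> K" using K(2) subgroup.m_closed[OF assms(1)] by blast
    then show False using p K by (simp add: m_assoc)
  qed
  moreover have "k \<otimes> p \<notin> K"
  proof
    assume "k \<otimes> p \<in> K"
    then have "inv k \<otimes> (k \<otimes> p) \<in> K" using K(2) subgroup.m_closed[OF assms(1)] by blast
    then show False using p K by (simp add: m_assoc[symmetric])
  qed
  moreover have "x \<in> P" if "x \<in> carrier G" "x \<notin> K" "x = p \<otimes> k \<or> x = k \<otimes> p" for x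
  proof -
    have "x \<notin> (\<lambda>x. inv x) ` P" using not_inv[OF _ that(3)] by blast
    with that(1)[unfolded P(4)] that(2) show ?thesis by blast
  qed
  ultimately show "p \<otimes> k \<in> P" "k \<otimes> p \<in> P"
    using p(1) K(1) by simp_all
qed

lemma pos_cone_union:
  assumes K: "subgroup K G" and P: "pos_cone_rel G K P" and Q: "pos_cone (G\<lparr>carrier := K\<rparr>) Q"
  shows "pos_cone G (P \<union> Q)"
proof -
  have P_cone: "P \<subseteq> carrier G" "\<And>a b. a \<in> P \<Longrightarrow> b \<in> P \<Longrightarrow> a \<otimes> b \<in> P"
    "P \<inter> K = {}" "P \<inter> (\<lambda>x. inv x) ` P = {}" "K \<inter> (\<lambda>x. inv x) ` P = {}"
    "carrier G = P \<union> K \<union> (\<lambda>x. inv x) ` P"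
    using P unfolding pos_cone_rel_def by auto
  have "Q \<subseteq> K" using Q unfolding pos_cone_def pos_cone_rel_def by simp
  then have "(\<lambda>x. inv\<^bsub>G\<lparr>carrier := K\<rparr>\<^esub> x) ` Q = (\<lambda>x. inv x) ` Q"
    using K by (auto intro!: image_cong)
  with Q have Q_cone: "\<And>a b. a \<in> Q \<Longrightarrow> b \<in> Q \<Longrightarrow> a \<otimes> b \<in> Q"
    "\<one> \<notin> Q" "Q \<inter> (\<lambda>x. inv x) ` Q = {}" "\<one> \<notin> (\<lambda>x. inv x) ` Q"
    "K = Q \<union> {\<one>} \<union> (\<lambda>x. inv x) ` Q"
    unfolding pos_cone_def pos_cone_rel_def by auto
  have "K \<subseteq> carrier G" "\<one> \<in> K" "(\<lambda>x. inv x) ` Q \<subseteq> K"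
    using K \<open>Q \<subseteq> K\<close> by (auto simp: subgroup.subset subgroup.one_closed subgroup.m_inv_closed)
  show ?thesis
    unfolding pos_cone_def pos_cone_rel_def
  proof (intro conjI ballI)
    show "P \<union> Q \<subseteq> carrier G"
      using P_cone(1) \<open>Q \<subseteq> K\<close> \<open>K \<subseteq> carrier G\<close> by blast
    fix a b assume "a \<in> P \<union> Q" "b \<in> P \<union> Q"
    then show "a \<otimes> b \<in> P \<union> Q"
      using P_cone(2) Q_cone(1) pos_cone_rel_mult_subgroup[OF K P] \<open>Q \<subseteq> K\<close> by blast
  next
    show "(P \<union> Q) \<inter> {\<one>} = {}"
      using P_cone(3) Q_cone(2) \<open>\<one> \<in> K\<close> by blast
    show "(P \<union> Q) \<inter> (\<lambda>x. inv x) ` (P \<union> Q) = {}"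
      using P_cone(3-5) Q_cone(3) \<open>Q \<subseteq> K\<close> \<open>(\<lambda>x. inv x) ` Q \<subseteq> K\<close> by blast
    show "{\<one>} \<inter> (\<lambda>x. inv x) ` (P \<union> Q) = {}"
      using P_cone(5) Q_cone(4) \<open>\<one> \<in> K\<close> by blast
    show "carrier G = P \<union> Q \<union> {\<one>} \<union> (\<lambda>x. inv x) ` (P \<union> Q)"
      using P_cone(6) Q_cone(5) by blast
  qed
qed

lemma ordering_quasi_morphism_mult:
  assumes "ordering_quasi_morphism G \<tau>" "g \<in> carrier G" "h \<in> carrier G"
  shows "\<tau> g + \<tau> h - 1 \<le> \<tau> (g \<otimes> h)"
  using assms unfolding ordering_quasi_morphism_def by force

lemma subgroup_qm_kernel:
  "ordering_quasi_morphism G \<tau> \<Longrightarrow> subgroup (qm_kernel G \<tau>) G"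
  by (simp add: ordering_quasi_morphism_def qm_kernel_def)

lemma ordering_quasi_morphism_inv_image:
  assumes "ordering_quasi_morphism G \<tau>"
  shows "(\<lambda>x. inv x) ` {g \<in> carrier G. 0 < \<tau> g} = {g \<in> carrier G. \<tau> g < 0}"
proof -
  have \<tau>_inv: "\<tau> (inv g) = - \<tau> g" if "g \<in> carrier G" for g
    using assms that unfolding ordering_quasi_morphism_def by blast
  show ?thesis
  proof (rule Set.set_eqI, rule iffI)
    fix g assume "g \<in> {g \<in> carrier G. \<tau> g < 0}"
    then have "inv g \<in> {g \<in> carrier G. 0 < \<tau> g}" "g = inv (inv g)"
      using \<tau>_inv by auto
    then show "g \<in> (\<lambda>x. inv x) ` {g \<in> carrier G. 0 < \<tau> g}" by blast
  qed (auto simp: \<tau>_inv)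
qed

lemma pos_cone_rel_ordering_quasi_morphism:
  assumes "ordering_quasi_morphism G \<tau>"
  shows "pos_cone_rel G (qm_kernel G \<tau>) {g \<in> carrier G. 0 < \<tau> g}"
  unfolding pos_cone_rel_def ordering_quasi_morphism_inv_image[OF assms]
proof (intro conjI ballI)
  fix a b assume "a \<in> {g \<in> carrier G. 0 < \<tau> g}" "b \<in> {g \<in> carrier G. 0 < \<tau> g}"
  then show "a \<otimes> b \<in> {g \<in> carrier G. 0 < \<tau> g}"
    using ordering_quasi_morphism_mult[OF assms, of a b] by auto
qed (auto simp: qm_kernel_def)

end

theorem proposition5p6:
  fixes G :: "('a, 'b) monoid_scheme" and X :: "'x set" and \<pi> :: "'x list \<Rightarrow> 'a"
    and \<tau> :: "'a \<Rightarrow> int"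
  assumes "group G"
    and "finite_gen_set G X \<pi>"
    and "ordering_quasi_morphism G \<tau>"
    and "\<exists>\<Delta> s0 A. tau_transducer G X \<pi> \<tau> \<Delta> s0 A"
  shows "pos_cone_rel G (qm_kernel G \<tau>) {g \<in> carrier G. \<tau> g > 0}
         \<and> (\<exists>L. one_counter_language X L \<and> \<pi> ` L = {g \<in> carrier G. \<tau> g > 0})
         \<and> (\<forall>L_C. one_counter_language X L_C
                  \<and> pos_cone (G\<lparr>carrier := qm_kernel G \<tau>\<rparr>) (\<pi> ` L_C)
                \<longrightarrow> (\<exists>L. one_counter_language X L
                         \<and> \<pi> ` L = {g \<in> carrier G. \<tau> g > 0} \<union> \<pi> ` L_C)
                    \<and> pos_cone G ({g \<in> carrier G. \<tau> g > 0} \<union> \<pi> ` L_C))"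
proof -
  interpret group G by fact
  obtain \<Delta> s0 A where T: "tau_transducer G X \<pi> \<tau> \<Delta> s0 A"
    using assms(4) by blast
  let ?P = "{g \<in> carrier G. \<tau> g > 0}"
  have cone: "pos_cone_rel G (qm_kernel G \<tau>) ?P"
    by (rule pos_cone_rel_ordering_quasi_morphism[OF assms(3)])
  have lang: "one_counter_language X (positive_output_language \<Delta> s0 A)"
    using T by (simp add: tau_transducer_def one_counter_language_positive_output)
  have image: "\<pi> ` positive_output_language \<Delta> s0 A = ?P"
    by (rule image_positive_output_language[OF assms(2) T])
  have "(\<exists>L. one_counter_language X L \<and> \<pi> ` L = ?P \<union> \<pi> ` L_C) \<and> pos_cone G (?P \<union> \<pi> ` L_C)"
    if "one_counter_language X L_C" "pos_cone (G\<lparr>carrier := qm_kernel G \<tau>\<rparr>) (\<pi> ` L_C)" for L_C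
  proof
    show "\<exists>L. one_counter_language X L \<and> \<pi> ` L = ?P \<union> \<pi> ` L_C"
      using one_counter_language_union[OF lang that(1)] image
      by (intro exI[of _ "positive_output_language \<Delta> s0 A \<union> L_C"]) (simp add: image_Un)
    show "pos_cone G (?P \<union> \<pi> ` L_C)"
      by (rule pos_cone_union[OF subgroup_qm_kernel[OF assms(3)] cone that(2)])
  qed
  with cone lang image show ?thesis by blast
qed

end
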